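(* Over Łukasiewicz logic Ł, the theory $T_Q$ proves: (1) every bookkeeping formula for $q$-variables valid in the standard MV-algebra, i.e. for all rationals $r,s\in[0,1]$ with chosen representations $r=m/n$, $s=k/l$, and $r*s=p/t$ (with $m\le n$, etc.), and each binary connective $*\in\{\cdot,\to,\oplus,\land,\lor,\equiv\}$, the formula $(q_{m/n} * q_{k/l})\equiv q_{p/t}$, where $r*s$ is computed in $[0,1]_{\text{Ł}}$, and likewise $\neg q_{m/n}\equiv q_{p/t}$ whenever $1-m/n=p/t$; (2) $q_{m/n}\equiv q_{m'/n'}$ whenever $m/n=m'/n'$; (3) $q_{m/n}\equiv\overline1$ whenever $m=n$.
   Context: Łukasiewicz logic Ł is the propositional logic in the connectives $\cdot,\to,\land,\lor,\neg,\oplus,\equiv,\overline0,\overline1$ with modus ponens; it is finitely strongly complete w.r.t. the standard MV-algebra $[0,1]_{\text{Ł}}$ (domain $[0,1]$, $x\cdot y=\max(0,x+y-1)$, $x\to y=\min(1,1-x+y)$, $\neg x=1-x$, $x\oplus y=\min(1,x+y)$, $\land=\min$, $\lor=\max$, $x\equiv y=1-|x-y|$). $x^k$ is the $k$-fold product, $kx$ the $k$-fold $\oplus$-sum. Let $Q=\{q_{m/n}\mid m,n\in\mathbb N,\ m\le n,\ n>0\}$ be propositional variables, one per pair $(m,n)$. The theory $T_Q$ has axioms: $q_{0/n}\equiv\overline0$ for $n>0$; $q_{1/1}\equiv\overline1$; $q_{1/n}\equiv(\neg q_{1/n})^{n-1}$ for $n\ge2$; $q_{m/n}\equiv m\,q_{1/n}$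 for $m\le n$, $n\ge2$. *)

theory Defs
  imports Complex_Main
begin

datatype fm =
    Var "nat \<times> nat"        \<comment> \<open>propositional variable; Var (m,n) is q_{m/n}\<close>
  | Bot
  | Conj fm fm
  | Imp fm fm

definition Neg :: "fm \<Rightarrow> fm" where "Neg a = Imp a Bot"
definition Top :: fm where "Top = Neg Bot"
definition Wedge :: "fm \<Rightarrow> fm \<Rightarrow> fm" where "Wedge a b = Conj a (Imp a b)"
definition Vee :: "fm \<Rightarrow> fm \<Rightarrow> fm" where
  "Vee a b = Wedge (Imp (Imp a b) b) (Imp (Imp b a) a)"
definition Oplus :: "fm \<Rightarrow> fm \<Rightarrow> fm" where "Oplus a b = Neg (Conj (Neg a) (Neg b))"
definition Equiv :: "fm \<Rightarrow> fm \<Rightarrow> fm" where "Equiv a b = Conj (Imp a b) (Imp b a)"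

fun Pow :: "fm \<Rightarrow> nat \<Rightarrow> fm" where
  "Pow a 0 = Top"
| "Pow a (Suc 0) = a"
| "Pow a (Suc (Suc k)) = Conj a (Pow a (Suc k))"

fun Mult :: "nat \<Rightarrow> fm \<Rightarrow> fm" where
  "Mult 0 a = Bot"
| "Mult (Suc 0) a = a"
| "Mult (Suc (Suc k)) a = Oplus a (Mult (Suc k) a)"

definition q :: "nat \<Rightarrow> nat \<Rightarrow> fm" where "q m n = Var (m, n)"

inductive Luk_axiom :: "fm \<Rightarrow> bool" where
  A1: "Luk_axiom (Imp (Imp a b) (Imp (Imp b c) (Imp a c)))"
| A2: "Luk_axiom (Imp (Conj a b) a)"
| A3: "Luk_axiom (Imp (Conj a b) (Conj b a))"
| A4: "Luk_axiom (Imp (Conj a (Imp a b)) (Conj b (Imp b a)))"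
| A5a: "Luk_axiom (Imp (Imp a (Imp b c)) (Imp (Conj a b) c))"
| A5b: "Luk_axiom (Imp (Imp (Conj a b) c) (Imp a (Imp b c)))"
| A6: "Luk_axiom (Imp (Imp (Imp a b) c) (Imp (Imp (Imp b a) c) c))"
| A7: "Luk_axiom (Imp Bot a)"
| DN: "Luk_axiom (Imp (Neg (Neg a)) a)"

inductive provable :: "fm set \<Rightarrow> fm \<Rightarrow> bool" (infix "\<turnstile>\<^sub>L" 55) where
  ax: "Luk_axiom a \<Longrightarrow> T \<turnstile>\<^sub>L a"
| hyp: "a \<in> T \<Longrightarrow> T \<turnstile>\<^sub>L a"
| mp: "T \<turnstile>\<^sub>L a \<Longrightarrow> T \<turnstile>\<^sub>L Imp a b \<Longrightarrow> T \<turnstile>\<^sub>L b"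

definition TQ :: "fm set" where
  "TQ = {Equiv (q 0 n) Bot | n. n > 0}
      \<union> {Equiv (q 1 1) Top}
      \<union> {Equiv (q 1 n) (Pow (Neg (q 1 n)) (n - 1)) | n. n \<ge> 2}
      \<union> {Equiv (q m n) (Mult m (q 1 n)) | m n. m \<le> n \<and> n \<ge> 2}"

datatype bconn = BProd | BImp | BOplus | BAnd | BOr | BEquiv

fun bsyn :: "bconn \<Rightarrow> fm \<Rightarrow> fm \<Rightarrow> fm" where
  "bsyn BProd a b = Conj a b"
| "bsyn BImp a b = Imp a b"
| "bsyn BOplus a b = Oplus a b"
| "bsyn BAnd a b = Wedge a b"
| "bsyn BOr a b = Vee a b"
| "bsyn BEquiv a b = Equiv a b"

fun bsem :: "bconn \<Rightarrow> real \<Rightarrow> real \<Rightarrow> real" where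
  "bsem BProd x y = max 0 (x + y - 1)"
| "bsem BImp x y = min 1 (1 - x + y)"
| "bsem BOplus x y = min 1 (x + y)"
| "bsem BAnd x y = min x y"
| "bsem BOr x y = max x y"
| "bsem BEquiv x y = 1 - \<bar>x - y\<bar>"

end

theory Submission
  imports Defs
begin

text \<open>The Lindenbaum algebra of \<open>T\<^sub>Q\<close> is an MV-algebra in which the class \<open>e\<^sub>n\<close> of
  \<open>q\<^bsub>1/n\<^esub>\<close> satisfies \<open>\<not>e\<^sub>n = (n-1)e\<^sub>n\<close>, and by \<open>T\<^sub>Q\<close> the class of \<open>q\<^bsub>m/n\<^esub>\<close> is \<open>m e\<^sub>n\<close>.
  In any MV-algebra such an element is unique, and then \<open>k e\<^sub>n\<^sub>k\<close> satisfies the same equation, so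
  \<open>e\<^sub>n = k e\<^sub>n\<^sub>k\<close>; all the \<open>q\<close>'s involved can thus be written as multiples of a single \<open>e\<^sub>N\<close> over a common
  denominator \<open>N\<close>.  On the multiples \<open>0, e\<^sub>N, \<dots>, N e\<^sub>N = 1\<close> every connective acts exactly like
  its standard semantics on \<open>0, 1/N, \<dots>, 1\<close>, which gives all the required equivalences.\<close>

section \<open>Derived rules of the Hilbert calculus\<close>

lemma imp_trans: "T \<turnstile>\<^sub>L Imp a b \<Longrightarrow> T \<turnstile>\<^sub>L Imp b c \<Longrightarrow> T \<turnstile>\<^sub>L Imp a c"
  by (meson Luk_axiom.A1 provable.ax provable.mp)

lemma imp_curry: "T \<turnstile>\<^sub>L Imp (Conj a b) c \<Longrightarrow> T \<turnstile>\<^sub>L Imp a (Imp b c)"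
  by (meson Luk_axiom.A5b provable.ax provable.mp)

lemma imp_uncurry: "T \<turnstile>\<^sub>L Imp a (Imp b c) \<Longrightarrow> T \<turnstile>\<^sub>L Imp (Conj a b) c"
  by (meson Luk_axiom.A5a provable.ax provable.mp)

lemma imp_weaken: "T \<turnstile>\<^sub>L Imp a (Imp b a)"
  by (meson Luk_axiom.A2 imp_curry provable.ax)

lemma imp_swap: "T \<turnstile>\<^sub>L Imp a (Imp b c) \<Longrightarrow> T \<turnstile>\<^sub>L Imp b (Imp a c)"
  by (meson Luk_axiom.A3 imp_curry provable.ax imp_trans imp_uncurry)

lemma Top_provable: "T \<turnstile>\<^sub>L Top"
  unfolding Top_def Neg_def by (simp add: Luk_axiom.A7 provable.ax)

lemma imp_refl: "T \<turnstile>\<^sub>L Imp a a"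
  by (meson imp_weaken Top_provable imp_swap provable.mp)

lemma Conj_mono_left: "T \<turnstile>\<^sub>L Imp a b \<Longrightarrow> T \<turnstile>\<^sub>L Imp (Conj a c) (Conj b c)"
  by (meson imp_curry imp_refl imp_trans imp_uncurry)

lemma Conj_mono_right: "T \<turnstile>\<^sub>L Imp a b \<Longrightarrow> T \<turnstile>\<^sub>L Imp (Conj c a) (Conj c b)"
  by (meson Luk_axiom.A3 provable.ax Conj_mono_left imp_trans)

lemma Imp_antimono_left: "T \<turnstile>\<^sub>L Imp a b \<Longrightarrow> T \<turnstile>\<^sub>L Imp (Imp b c) (Imp a c)"
  by (meson Luk_axiom.A1 provable.ax provable.mp)

lemma Imp_mono_right: "T \<turnstile>\<^sub>L Imp b c \<Longrightarrow> T \<turnstile>\<^sub>L Imp (Imp a b) (Imp a c)"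
  by (meson Luk_axiom.A1 imp_swap provable.ax provable.mp)

lemma ConjI: "T \<turnstile>\<^sub>L a \<Longrightarrow> T \<turnstile>\<^sub>L b \<Longrightarrow> T \<turnstile>\<^sub>L Conj a b"
  by (meson imp_curry provable.mp imp_refl)

lemma ConjD1: "T \<turnstile>\<^sub>L Conj a b \<Longrightarrow> T \<turnstile>\<^sub>L a"
  by (meson Luk_axiom.A2 provable.ax provable.mp)

lemma ConjD2: "T \<turnstile>\<^sub>L Conj a b \<Longrightarrow> T \<turnstile>\<^sub>L b"
  by (meson ConjD1 Luk_axiom.A3 provable.ax provable.mp)

lemma Top_imp: "T \<turnstile>\<^sub>L Imp (Imp Top a) a"
  by (meson Top_provable imp_swap provable.mp imp_refl)

lemma imp_Top: "T \<turnstile>\<^sub>L Imp a Top"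
  by (meson imp_weaken Top_provable provable.mp)

section \<open>MV-algebras\<close>

text \<open>Residuated-lattice presentation matching the axioms of the Hilbert calculus, so that
  the Lindenbaum algebra is an instance with no translation.\<close>

locale mv_algebra =
  fixes le :: "'a \<Rightarrow> 'a \<Rightarrow> bool" (infix "\<preceq>" 50)
    and cdot :: "'a \<Rightarrow> 'a \<Rightarrow> 'a" (infixl "\<odot>" 70)
    and res :: "'a \<Rightarrow> 'a \<Rightarrow> 'a" (infixr "\<leadsto>" 60)
    and zero :: 'a ("\<zero>")
  assumes refl_le: "x \<preceq> x"
    and trans_le: "x \<preceq> y \<Longrightarrow> y \<preceq> z \<Longrightarrow> x \<preceq> z"
    and antisym_le: "x \<preceq> y \<Longrightarrow> y \<preceq> x \<Longrightarrow> x = y"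
    and cdot_commute: "x \<odot> y = y \<odot> x"
    and residuation: "x \<odot> y \<preceq> z \<longleftrightarrow> x \<preceq> y \<leadsto> z"
    and res_cdot: "x \<odot> y \<leadsto> z = x \<leadsto> y \<leadsto> z"
    and zero_le: "\<zero> \<preceq> x"
    and le_top: "x \<preceq> \<zero> \<leadsto> \<zero>"
    and top_res: "(\<zero> \<leadsto> \<zero>) \<leadsto> x = x"
    and divisibility: "x \<odot> (x \<leadsto> y) = y \<odot> (y \<leadsto> x)"
    and double_neg: "(x \<leadsto> \<zero>) \<leadsto> \<zero> = x"
    and prelinearity: "((x \<leadsto> y) \<leadsto> z) \<odot> ((y \<leadsto> x) \<leadsto> z) \<preceq> z"
begin

declare refl_le [simp] trans_le [trans]

definition one :: 'a ("\<one>") where "\<one> = \<zero> \<leadsto> \<zero>"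
definition neg :: "'a \<Rightarrow> 'a" where "neg x = x \<leadsto> \<zero>"
definition oplus :: "'a \<Rightarrow> 'a \<Rightarrow> 'a" (infixl "\<oplus>" 65)
  where "x \<oplus> y = neg (neg x \<odot> neg y)"
definition meet :: "'a \<Rightarrow> 'a \<Rightarrow> 'a" where "meet x y = x \<odot> (x \<leadsto> y)"
definition join :: "'a \<Rightarrow> 'a \<Rightarrow> 'a" where "join x y = meet ((x \<leadsto> y) \<leadsto> y) ((y \<leadsto> x) \<leadsto> x)"
definition eqv :: "'a \<Rightarrow> 'a \<Rightarrow> 'a" where "eqv x y = (x \<leadsto> y) \<odot> (y \<leadsto> x)"

primrec nmult :: "nat \<Rightarrow> 'a \<Rightarrow> 'a" where
  "nmult 0 x = \<zero>"
| "nmult (Suc k) x = x \<oplus> nmult k x"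

primrec npow :: "nat \<Rightarrow> 'a \<Rightarrow> 'a" where
  "npow 0 x = \<one>"
| "npow (Suc k) x = x \<odot> npow k x"

lemma eq_if_same_upper_bounds: "(\<And>z. a \<preceq> z \<longleftrightarrow> b \<preceq> z) \<Longrightarrow> a = b"
  by (meson antisym_le refl_le)

lemma cdot_assoc: "x \<odot> y \<odot> w = x \<odot> (y \<odot> w)"
  by (rule eq_if_same_upper_bounds) (simp add: residuation res_cdot)

lemma cdot_mono_left: "x \<preceq> y \<Longrightarrow> x \<odot> z \<preceq> y \<odot> z"
  by (meson residuation trans_le refl_le)

lemma cdot_mono_right: "x \<preceq> y \<Longrightarrow> z \<odot> x \<preceq> z \<odot> y"
  by (metis cdot_commute cdot_mono_left)

lemma le_one: "x \<preceq> \<one>"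
  unfolding one_def by (rule le_top)

lemma one_res [simp]: "\<one> \<leadsto> x = x"
  unfolding one_def by (rule top_res)

lemma cdot_one [simp]: "x \<odot> \<one> = x"
proof (rule antisym_le)
  show "x \<odot> \<one> \<preceq> x" by (simp add: residuation)
  have "x \<preceq> \<one> \<leadsto> x \<odot> \<one>" using residuation refl_le by blast
  then show "x \<preceq> x \<odot> \<one>" by simp
qed

lemma one_cdot [simp]: "\<one> \<odot> x = x"
  by (metis cdot_commute cdot_one)

lemma cdot_le_left: "x \<odot> y \<preceq> x"
  by (metis le_one cdot_mono_right cdot_one)

lemma cdot_res_le: "x \<odot> (x \<leadsto> y) \<preceq> y"
  by (metis cdot_commute residuation refl_le)

lemma res_mono: "y \<preceq> z \<Longrightarrow> x \<leadsto> y \<preceq> x \<leadsto> z"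
  by (metis cdot_commute residuation trans_le cdot_res_le)

lemma le_iff_res_eq_one: "x \<preceq> y \<longleftrightarrow> x \<leadsto> y = \<one>"
  by (metis antisym_le residuation le_one one_cdot)

lemma cdot_zero [simp]: "x \<odot> \<zero> = \<zero>"
  by (metis antisym_le residuation le_top zero_le)

lemma zero_cdot [simp]: "\<zero> \<odot> x = \<zero>"
  by (metis cdot_commute cdot_zero)

lemma le_zero_iff: "x \<preceq> \<zero> \<longleftrightarrow> x = \<zero>"
  by (metis antisym_le zero_le refl_le)

lemma neg_neg [simp]: "neg (neg x) = x"
  unfolding neg_def by (rule double_neg)

lemma neg_antimono: "x \<preceq> y \<Longrightarrow> neg y \<preceq> neg x"
  unfolding neg_def by (metis residuation trans_le cdot_mono_right cdot_res_le cdot_commute)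

lemma neg_zero [simp]: "neg \<zero> = \<one>"
  by (simp add: neg_def one_def)

lemma neg_one [simp]: "neg \<one> = \<zero>"
  by (metis neg_neg neg_zero)

lemma res_eq_neg_cdot: "x \<leadsto> y = neg (x \<odot> neg y)"
  by (metis res_cdot double_neg neg_def)

lemma neg_res: "neg (x \<leadsto> y) = x \<odot> neg y"
  by (simp add: res_eq_neg_cdot)

lemma neg_cdot: "neg (x \<odot> y) = x \<leadsto> neg y"
  by (simp add: res_eq_neg_cdot)

lemma cdot_eq_zero_iff: "x \<odot> y = \<zero> \<longleftrightarrow> x \<preceq> neg y"
  by (metis residuation le_zero_iff neg_def)

lemma cdot_neg_self [simp]: "x \<odot> neg x = \<zero>"
  by (simp add: cdot_eq_zero_iff)

lemma oplus_commute: "x \<oplus> y = y \<oplus> x"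
  by (simp add: oplus_def cdot_commute)

lemma oplus_assoc: "x \<oplus> y \<oplus> z = x \<oplus> (y \<oplus> z)"
  by (simp add: oplus_def cdot_assoc)

lemma oplus_left_commute: "x \<oplus> (y \<oplus> z) = y \<oplus> (x \<oplus> z)"
  by (metis oplus_assoc oplus_commute)

lemma oplus_zero [simp]: "x \<oplus> \<zero> = x"
  by (simp add: oplus_def)

lemma zero_oplus [simp]: "\<zero> \<oplus> x = x"
  by (simp add: oplus_def)

lemma one_oplus [simp]: "\<one> \<oplus> x = \<one>"
  by (simp add: oplus_def)

lemma neg_oplus: "neg (x \<oplus> y) = neg x \<odot> neg y"
  by (simp add: oplus_def)

lemma neg_cdot_eq_oplus: "neg (x \<odot> y) = neg x \<oplus> neg y"
  by (simp add: oplus_def)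

lemma res_eq_neg_oplus: "x \<leadsto> y = neg x \<oplus> y"
  by (simp add: oplus_def res_eq_neg_cdot)

lemma oplus_neg_self [simp]: "x \<oplus> neg x = \<one>"
  by (metis le_iff_res_eq_one res_eq_neg_oplus refl_le oplus_commute)

lemma le_oplus_left: "x \<preceq> x \<oplus> y"
  by (metis neg_neg cdot_le_left neg_antimono oplus_def)

lemma oplus_mono_left: "x \<preceq> y \<Longrightarrow> x \<oplus> z \<preceq> y \<oplus> z"
  by (simp add: oplus_def neg_antimono cdot_mono_left)

lemma oplus_mono_right: "x \<preceq> y \<Longrightarrow> z \<oplus> x \<preceq> z \<oplus> y"
  by (metis oplus_commute oplus_mono_left)

lemma le_iff_neg_oplus_eq_one: "x \<preceq> y \<longleftrightarrow> neg x \<oplus> y = \<one>"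
  by (simp add: le_iff_res_eq_one res_eq_neg_oplus)

text \<open>Divisibility, read through the negation: \<open>y \<oplus> (\<not>y \<odot> w) = w \<oplus> (\<not>w \<odot> y)\<close>, the MV-form of \<open>max\<close>.\<close>

lemma oplus_neg_cdot_symmetric: "y \<oplus> (neg y \<odot> w) = neg (neg w \<odot> (neg w \<leadsto> neg y))"
proof -
  have "y \<oplus> (neg y \<odot> w) = neg (neg y \<odot> (neg y \<leadsto> neg w))"
    by (simp add: oplus_def neg_cdot)
  also have "\<dots> = neg (neg w \<odot> (neg w \<leadsto> neg y))"
    by (simp add: divisibility)
  finally show ?thesis .
qed

lemma le_oplus_neg_cdot: "w \<preceq> y \<oplus> (neg y \<odot> w)"
  unfolding oplus_neg_cdot_symmetric by (metis neg_neg cdot_le_left neg_antimono)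

lemma oplus_neg_cdot: "y \<preceq> w \<Longrightarrow> y \<oplus> (neg y \<odot> w) = w"
  unfolding oplus_neg_cdot_symmetric by (metis cdot_one le_iff_res_eq_one neg_antimono neg_neg)

lemma neg_cdot_oplus_le: "neg x \<odot> (x \<oplus> w) \<preceq> w"
proof -
  have "neg w \<preceq> x \<oplus> (neg x \<odot> neg w)" by (rule le_oplus_neg_cdot)
  then have "neg (x \<oplus> (neg x \<odot> neg w)) \<preceq> w" by (metis neg_neg neg_antimono)
  then show ?thesis by (simp add: neg_oplus neg_cdot res_eq_neg_oplus)
qed

lemma cdot_oplus_le: "x \<odot> (a \<oplus> b) \<preceq> (x \<odot> a) \<oplus> b"
proof -
  have "(a \<oplus> b) \<odot> neg b \<preceq> a" by (metis neg_cdot_oplus_le cdot_commute oplus_commute)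
  then have "x \<odot> (a \<oplus> b) \<odot> neg b \<preceq> x \<odot> a" by (simp add: cdot_assoc cdot_mono_right)
  then show ?thesis by (simp add: residuation res_eq_neg_oplus oplus_commute)
qed

lemma cdot_oplus_eq_zero:
  assumes "x \<odot> y = \<zero>" and "(x \<oplus> y) \<odot> z = \<zero>"
  shows "x \<odot> (y \<oplus> z) = \<zero>"
proof -
  have y: "y \<preceq> neg x" using assms(1) by (metis cdot_commute cdot_eq_zero_iff)
  have "z \<preceq> neg x \<odot> neg y" using assms(2) by (metis cdot_commute cdot_eq_zero_iff neg_oplus)
  then have "y \<oplus> z \<preceq> y \<oplus> (neg y \<odot> neg x)" by (metis cdot_commute oplus_mono_right)
  also have "\<dots> = neg x" using y by (rule oplus_neg_cdot)
  finally show ?thesis by (metis cdot_commute cdot_eq_zero_iff)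
qed

lemma meet_le1: "meet x y \<preceq> x"
  by (simp add: meet_def cdot_le_left)

lemma meet_le2: "meet x y \<preceq> y"
  by (simp add: meet_def cdot_res_le)

lemma meet_commute: "meet x y = meet y x"
  by (simp add: meet_def divisibility)

lemma meet_greatest: "z \<preceq> x \<Longrightarrow> z \<preceq> y \<Longrightarrow> z \<preceq> meet x y"
proof -
  assume zx: "z \<preceq> x" and zy: "z \<preceq> y"
  have "z = meet z x" using zx by (metis cdot_one le_iff_res_eq_one meet_def)
  also have "\<dots> = meet x z" by (rule meet_commute)
  also have "\<dots> \<preceq> meet x y" unfolding meet_def using zy by (simp add: cdot_mono_right res_mono)
  finally show ?thesis .
qed

lemma meet_absorb1: "x \<preceq> y \<Longrightarrow> meet x y = x"
  by (meson antisym_le refl_le meet_greatest meet_le1)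

lemma meet_absorb2: "y \<preceq> x \<Longrightarrow> meet x y = y"
  by (metis meet_commute meet_absorb1)

lemma meet_zero [simp]: "meet x \<zero> = \<zero>"
  by (metis antisym_le zero_le meet_le2)

text \<open>The MV-form of \<open>min (x - y, y - x) = 0\<close>; prelinearity enters only here.\<close>

lemma meet_cdot_neg_eq_zero: "meet (x \<odot> neg y) (y \<odot> neg x) = \<zero>"
proof -
  define u where "u = neg (meet (neg (x \<leadsto> y)) (neg (y \<leadsto> x)))"
  have "(x \<leadsto> y) \<leadsto> u = \<one>" "(y \<leadsto> x) \<leadsto> u = \<one>"
    unfolding u_def by (metis le_iff_res_eq_one neg_neg neg_antimono meet_le1 meet_le2)+
  then have "\<one> \<preceq> u" using prelinearity[of x y u] by simp
  then have "neg u = \<zero>" by (metis antisym_le le_one neg_one)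
  then show ?thesis by (simp add: u_def neg_res)
qed

lemma meet_oplus_eq_zero:
  assumes "meet a b = \<zero>" and "meet a c = \<zero>"
  shows "meet a (b \<oplus> c) = \<zero>"
proof -
  have "a \<preceq> neg (a \<leadsto> b)" using assms(1) by (simp add: meet_def cdot_eq_zero_iff)
  then have a: "a \<preceq> a \<odot> neg b" by (simp add: neg_res)
  have "meet a (b \<oplus> c) = a \<odot> (b \<oplus> (a \<leadsto> c))"
    by (simp add: meet_def res_eq_neg_oplus oplus_left_commute)
  also have "\<dots> \<preceq> a \<odot> neg b \<odot> (b \<oplus> (a \<leadsto> c))" using a by (rule cdot_mono_left)
  also have "\<dots> = a \<odot> (neg b \<odot> (b \<oplus> (a \<leadsto> c)))" by (rule cdot_assoc)
  also have "\<dots> \<preceq> a \<odot> (a \<leadsto> c)" by (rule cdot_mono_right) (rule neg_cdot_oplus_le)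
  also have "\<dots> = \<zero>" using assms(2) by (simp add: meet_def)
  finally show ?thesis by (simp add: le_zero_iff)
qed

lemma join_absorb2: "x \<preceq> y \<Longrightarrow> join x y = y"
proof -
  assume xy: "x \<preceq> y"
  have "(y \<leadsto> x) \<leadsto> x = x \<oplus> (neg x \<odot> y)"
    by (simp add: res_eq_neg_oplus[of "y \<leadsto> x"] neg_res oplus_commute cdot_commute)
  also have "\<dots> = y" using xy by (rule oplus_neg_cdot)
  finally show ?thesis
    using xy by (simp add: join_def le_iff_res_eq_one[THEN iffD1] meet_absorb1)
qed

lemma join_commute: "join x y = join y x"
  by (simp add: join_def meet_commute)

lemma nmult_add: "nmult (i + j) x = nmult i x \<oplus> nmult j x"
  by (induction i) (auto simp: oplus_assoc)

lemma nmult_mult: "nmult (i * j) x = nmult i (nmult j x)"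
  by (induction i) (auto simp: nmult_add)

lemma nmult_le_nmult: "i \<le> j \<Longrightarrow> nmult i x \<preceq> nmult j x"
  by (metis le_add_diff_inverse nmult_add le_oplus_left)

lemma nmult_oplus: "nmult k (a \<oplus> b) = nmult k a \<oplus> nmult k b"
  by (induction k) (auto simp: oplus_assoc oplus_left_commute)

lemma nmult_mono: "a \<preceq> b \<Longrightarrow> nmult k a \<preceq> nmult k b"
proof (induction k)
  case (Suc k)
  have "a \<oplus> nmult k a \<preceq> b \<oplus> nmult k a" using Suc by (simp add: oplus_mono_left)
  also have "\<dots> \<preceq> b \<oplus> nmult k b" using Suc by (simp add: oplus_mono_right)
  finally show ?case by simp
qed simp

lemma neg_npow: "neg (npow k x) = nmult k (neg x)"
  by (induction k) (simp_all add: neg_cdot_eq_oplus)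

lemma meet_nmult_eq_zero: "meet a b = \<zero> \<Longrightarrow> meet a (nmult k b) = \<zero>"
  by (induction k) (auto simp: meet_oplus_eq_zero)

lemma meet_nmult: "meet (nmult i x) (nmult j x) = nmult (min i j) x"
  by (cases "i \<le> j") (auto simp: meet_absorb1 meet_absorb2 nmult_le_nmult min_def)

lemma join_nmult: "join (nmult i x) (nmult j x) = nmult (max i j) x"
  by (metis join_absorb2 join_commute max.commute max_def nle_le nmult_le_nmult)

subsection \<open>The element \<open>1/n\<close>\<close>

definition unit_fraction :: "nat \<Rightarrow> 'a \<Rightarrow> bool"
  where "unit_fraction n e \<longleftrightarrow> neg e = nmult (n - 1) e"

lemma nmult_eq_one:
  assumes e: "unit_fraction n e" and "0 < n" "n \<le> k"
  shows "nmult k e = \<one>"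
proof -
  have "nmult n e = e \<oplus> nmult (n - 1) e" using \<open>0 < n\<close> by (cases n) auto
  then have "nmult n e = \<one>" using e by (metis oplus_neg_self unit_fraction_def)
  moreover have "nmult k e = nmult n e \<oplus> nmult (k - n) e"
    using \<open>n \<le> k\<close> by (metis nmult_add le_add_diff_inverse)
  ultimately show ?thesis by (simp add: oplus_commute)
qed

lemma cdot_nmult_eq_zero: "unit_fraction n e \<Longrightarrow> i + j \<le> n \<Longrightarrow> nmult i e \<odot> nmult j e = \<zero>"
proof (induction i arbitrary: j)
  case (Suc i)
  have "nmult j e \<preceq> nmult (n - 1) e" using Suc.prems(2) by (simp add: nmult_le_nmult)
  then have 1: "nmult j e \<odot> e = \<zero>" using Suc.prems(1) by (simp add: cdot_eq_zero_iff unit_fraction_def)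
  have "nmult i e \<odot> nmult (Suc j) e = \<zero>" using Suc.IH[of "Suc j"] Suc.prems by simp
  then have 2: "(nmult j e \<oplus> e) \<odot> nmult i e = \<zero>" by (simp add: cdot_commute oplus_commute)
  show ?case using cdot_oplus_eq_zero[OF 1 2] by (simp add: cdot_commute)
qed simp

lemma neg_nmult:
  assumes e: "unit_fraction n e" and "0 < n" "j \<le> n"
  shows "neg (nmult j e) = nmult (n - j) e"
proof (rule antisym_le)
  have "nmult j e \<oplus> nmult (n - j) e = \<one>"
    using nmult_eq_one[OF e \<open>0 < n\<close>, of n] \<open>j \<le> n\<close> by (simp add: nmult_add[symmetric])
  then show "neg (nmult j e) \<preceq> nmult (n - j) e" by (simp add: le_iff_neg_oplus_eq_one)
  have "nmult (n - j) e \<odot> nmult j e = \<zero>" using cdot_nmult_eq_zero[OF e] \<open>j \<le> n\<close> by simp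
  then show "nmult (n - j) e \<preceq> neg (nmult j e)" by (simp add: cdot_eq_zero_iff)
qed

text \<open>If \<open>x\<close> and \<open>y\<close> are both \<open>1/n\<close>, then \<open>d = x \<odot> \<not>y\<close> lies below \<open>(n-1) d'\<close> with
  \<open>d' = y \<odot> \<not>x\<close>, while \<open>d \<and> d' = 0\<close> forces \<open>d \<and> (n-1) d' = 0\<close>; hence \<open>d = 0\<close>.\<close>

lemma unit_fraction_le:
  assumes x: "unit_fraction n x" and y: "unit_fraction n y"
  shows "x \<preceq> y"
proof -
  define d where "d = x \<odot> neg y"
  define D where "D = nmult (n - 1) (y \<odot> neg x)"
  have "y \<preceq> x \<oplus> (y \<odot> neg x)" by (metis le_oplus_neg_cdot cdot_commute)
  then have "nmult (n - 1) y \<preceq> nmult (n - 1) (x \<oplus> (y \<odot> neg x))" by (rule nmult_mono)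
  then have "neg y \<preceq> neg x \<oplus> D"
    using x y by (simp add: nmult_oplus D_def unit_fraction_def)
  then have "d \<preceq> x \<odot> (neg x \<oplus> D)" unfolding d_def by (rule cdot_mono_right)
  also have "\<dots> \<preceq> (x \<odot> neg x) \<oplus> D" by (rule cdot_oplus_le)
  also have "\<dots> = D" by simp
  finally have dD: "d \<preceq> D" .
  have "meet d D = \<zero>"
    unfolding d_def D_def by (rule meet_nmult_eq_zero) (rule meet_cdot_neg_eq_zero)
  then have "d = \<zero>" using dD by (simp add: meet_absorb1)
  then show ?thesis by (simp add: d_def cdot_eq_zero_iff)
qed

lemma unit_fraction_unique: "unit_fraction n x \<Longrightarrow> unit_fraction n y \<Longrightarrow> x = y"
  by (meson antisym_le unit_fraction_le)

lemma unit_fraction_nmult: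
  assumes f: "unit_fraction (n * k) f" and "0 < n" "0 < k"
  shows "unit_fraction n (nmult k f)"
proof -
  have "neg (nmult k f) = nmult (n * k - k) f"
    using neg_nmult[OF f] assms by simp
  also have "n * k - k = (n - 1) * k" by (simp add: diff_mult_distrib)
  finally show ?thesis by (simp add: unit_fraction_def nmult_mult)
qed

lemma nmult_min: "unit_fraction n e \<Longrightarrow> 0 < n \<Longrightarrow> nmult k e = nmult (min n k) e"
  by (metis nmult_eq_one min_def nle_le)

lemma oplus_nmult:
  "unit_fraction n e \<Longrightarrow> 0 < n \<Longrightarrow> nmult i e \<oplus> nmult j e = nmult (min n (i + j)) e"
  by (metis nmult_add nmult_min)

context
  fixes n :: nat and e :: 'a
  assumes e: "unit_fraction n e" and n: "0 < n"
begin

lemma cdot_nmult: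
  assumes i: "i \<le> n" and j: "j \<le> n"
  shows "nmult i e \<odot> nmult j e = nmult (i + j - n) e"
proof -
  have "nmult i e \<odot> nmult j e = neg (neg (nmult i e) \<oplus> neg (nmult j e))"
    by (simp add: neg_oplus)
  also have "\<dots> = neg (nmult (min n (n - i + (n - j))) e)"
    using neg_nmult[OF e n] oplus_nmult[OF e n] i j by simp
  also have "\<dots> = nmult (n - min n (n - i + (n - j))) e" using neg_nmult[OF e n] by simp
  also have "n - min n (n - i + (n - j)) = i + j - n" using i j by simp
  finally show ?thesis .
qed

lemma res_nmult:
  assumes i: "i \<le> n" and j: "j \<le> n"
  shows "nmult i e \<leadsto> nmult j e = nmult (min n (n - i + j)) e"
  using neg_nmult[OF e n i] oplus_nmult[OF e n] by (simp add: res_eq_neg_oplus)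

lemma eqv_nmult:
  assumes "i \<le> n" "j \<le> n"
  shows "eqv (nmult i e) (nmult j e) = nmult (min n (n - i + j) + min n (n - j + i) - n) e"
  using assms by (simp add: eqv_def res_nmult cdot_nmult)

end

end

section \<open>The Lindenbaum algebra of \<open>T\<^sub>Q\<close>\<close>

definition provably_equivalent :: "fm \<Rightarrow> fm \<Rightarrow> bool" where
  "provably_equivalent a b \<longleftrightarrow> TQ \<turnstile>\<^sub>L Imp a b \<and> TQ \<turnstile>\<^sub>L Imp b a"

lemma equivp_provably_equivalent: "equivp provably_equivalent"
  unfolding provably_equivalent_def
  by (rule equivpI; auto simp: reflp_def symp_def transp_def intro: imp_refl imp_trans)

quotient_type lindenbaum = fm / provably_equivalent
  by (rule equivp_provably_equivalent)

lift_definition lind_le :: "lindenbaum \<Rightarrow> lindenbaum \<Rightarrow> bool" is "\<lambda>a b. TQ \<turnstile>\<^sub>L Imp a b"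
  unfolding provably_equivalent_def by (meson imp_trans)

lift_definition lind_cdot :: "lindenbaum \<Rightarrow> lindenbaum \<Rightarrow> lindenbaum" is Conj
  unfolding provably_equivalent_def by (meson Conj_mono_left Conj_mono_right imp_trans)

lift_definition lind_res :: "lindenbaum \<Rightarrow> lindenbaum \<Rightarrow> lindenbaum" is Imp
  unfolding provably_equivalent_def by (meson Imp_antimono_left Imp_mono_right imp_trans)

lift_definition lind_zero :: lindenbaum is Bot .

definition cls :: "fm \<Rightarrow> lindenbaum" where "cls = abs_lindenbaum"

lemma cls_Conj [simp]: "cls (Conj a b) = lind_cdot (cls a) (cls b)"
  unfolding cls_def by (simp add: lind_cdot.abs_eq)

lemma cls_Imp [simp]: "cls (Imp a b) = lind_res (cls a) (cls b)"
  unfolding cls_def by (simp add: lind_res.abs_eq)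

lemma cls_Bot [simp]: "cls Bot = lind_zero"
  unfolding cls_def by (simp add: lind_zero.abs_eq)

lemma cls_eq_iff: "cls a = cls b \<longleftrightarrow> provably_equivalent a b"
  unfolding cls_def by (simp add: lindenbaum.abs_eq_iff)

lemma lind_le_cls: "lind_le (cls a) (cls b) \<longleftrightarrow> TQ \<turnstile>\<^sub>L Imp a b"
  unfolding cls_def by (simp add: lind_le.abs_eq)

lemma cls_surj: "\<exists>a. x = cls a"
  unfolding cls_def by (metis Quotient_lindenbaum Quotient_abs_rep)

interpretation Lind: mv_algebra lind_le lind_cdot lind_res lind_zero
proof
  fix x y z
  obtain a b c where x: "x = cls a" and y: "y = cls b" and z: "z = cls c" by (meson cls_surj)
  have Top: "lind_res lind_zero lind_zero = cls Top" by (simp add: Top_def Neg_def)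
  show "lind_le x x" unfolding x lind_le_cls by (rule imp_refl)
  show "lind_le x z" if "lind_le x y" "lind_le y z"
    using that unfolding x y z lind_le_cls by (rule imp_trans)
  show "x = y" if "lind_le x y" "lind_le y x"
    using that unfolding x y lind_le_cls cls_eq_iff provably_equivalent_def ..
  show "lind_cdot x y = lind_cdot y x"
    unfolding x y cls_Conj[symmetric] cls_eq_iff provably_equivalent_def
    by (simp add: provable.ax Luk_axiom.A3)
  show "lind_le (lind_cdot x y) z \<longleftrightarrow> lind_le x (lind_res y z)"
    unfolding x y z cls_Conj[symmetric] cls_Imp[symmetric] lind_le_cls
    by (meson imp_curry imp_uncurry)
  show "lind_res (lind_cdot x y) z = lind_res x (lind_res y z)"
    unfolding x y z cls_Conj[symmetric] cls_Imp[symmetric] cls_eq_iff provably_equivalent_def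
    by (simp add: provable.ax Luk_axiom.A5a Luk_axiom.A5b)
  show "lind_le lind_zero x"
    unfolding x cls_Bot[symmetric] lind_le_cls by (simp add: provable.ax Luk_axiom.A7)
  show "lind_le x (lind_res lind_zero lind_zero)"
    unfolding x Top lind_le_cls by (rule imp_Top)
  show "lind_res (lind_res lind_zero lind_zero) x = x"
    unfolding x Top cls_Imp[symmetric] cls_eq_iff provably_equivalent_def
    by (simp add: imp_weaken Top_imp)
  show "lind_cdot x (lind_res x y) = lind_cdot y (lind_res y x)"
    unfolding x y cls_Conj[symmetric] cls_Imp[symmetric] cls_eq_iff provably_equivalent_def
    by (simp add: provable.ax Luk_axiom.A4)
  show "lind_res (lind_res x lind_zero) lind_zero = x"
    unfolding x cls_Bot[symmetric] cls_Imp[symmetric] cls_eq_iff provably_equivalent_def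
    by (metis provable.ax Luk_axiom.DN Neg_def imp_swap imp_refl)
  show "lind_le (lind_cdot (lind_res (lind_res x y) z) (lind_res (lind_res y x) z)) z"
    unfolding x y z cls_Conj[symmetric] cls_Imp[symmetric] lind_le_cls
    by (simp add: imp_uncurry provable.ax Luk_axiom.A6)
qed

lemma cls_Top [simp]: "cls Top = Lind.one"
  by (simp add: Top_def Neg_def Lind.one_def)

lemma cls_Neg [simp]: "cls (Neg a) = Lind.neg (cls a)"
  by (simp add: Neg_def Lind.neg_def)

lemma cls_Oplus [simp]: "cls (Oplus a b) = Lind.oplus (cls a) (cls b)"
  by (simp add: Oplus_def Lind.oplus_def)

lemma cls_Wedge [simp]: "cls (Wedge a b) = Lind.meet (cls a) (cls b)"
  by (simp add: Wedge_def Lind.meet_def)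

lemma cls_Vee [simp]: "cls (Vee a b) = Lind.join (cls a) (cls b)"
  by (simp add: Vee_def Lind.join_def)

lemma cls_Equiv [simp]: "cls (Equiv a b) = Lind.eqv (cls a) (cls b)"
  by (simp add: Equiv_def Lind.eqv_def)

lemma cls_Mult [simp]: "cls (Mult k a) = Lind.nmult k (cls a)"
  by (induction k a rule: Mult.induct) auto

lemma cls_Pow [simp]: "cls (Pow a k) = Lind.npow k (cls a)"
  by (induction a k rule: Pow.induct) auto

lemma cls_eq_iff_provable_Equiv: "cls a = cls b \<longleftrightarrow> TQ \<turnstile>\<^sub>L Equiv a b"
  unfolding cls_eq_iff provably_equivalent_def Equiv_def by (meson ConjD1 ConjD2 ConjI)

lemma cls_TQ_axiom: "Equiv a b \<in> TQ \<Longrightarrow> cls a = cls b"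
  by (simp add: cls_eq_iff_provable_Equiv provable.hyp)

lemma Equiv_q1_Pow_in_TQ: "2 \<le> n \<Longrightarrow> Equiv (q 1 n) (Pow (Neg (q 1 n)) (n - 1)) \<in> TQ"
  unfolding TQ_def by (rule UnI1, rule UnI2) blast

lemma Equiv_q_Mult_in_TQ: "2 \<le> n \<Longrightarrow> m \<le> n \<Longrightarrow> Equiv (q m n) (Mult m (q 1 n)) \<in> TQ"
  unfolding TQ_def by (rule UnI2) blast

lemma unit_fraction_cls_q1: "0 < n \<Longrightarrow> Lind.unit_fraction n (cls (q 1 n))"
proof (cases "n = 1")
  case True
  have "cls (q 1 1) = Lind.one" using cls_TQ_axiom[of "q 1 1" Top] by (simp add: TQ_def)
  then show ?thesis using True by (simp add: Lind.unit_fraction_def)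
next
  case False
  assume "0 < n"
  with False have "2 \<le> n" by simp
  then have "Equiv (q 1 n) (Pow (Neg (q 1 n)) (n - 1)) \<in> TQ" by (rule Equiv_q1_Pow_in_TQ)
  then have "cls (q 1 n) = cls (Pow (Neg (q 1 n)) (n - 1))" by (rule cls_TQ_axiom)
  also have "\<dots> = Lind.npow (n - 1) (Lind.neg (cls (q 1 n)))" by simp
  finally show ?thesis by (metis Lind.neg_npow Lind.neg_neg Lind.unit_fraction_def)
qed

lemma cls_q: "0 < n \<Longrightarrow> m \<le> n \<Longrightarrow> cls (q m n) = Lind.nmult m (cls (q 1 n))"
proof (cases "n = 1")
  case True
  assume "m \<le> n"
  have "Equiv (q 0 1) Bot \<in> TQ" unfolding TQ_def by blast
  then have "cls (q 0 1) = lind_zero" using cls_TQ_axiom by fastforce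
  moreover have "m = 0 \<or> m = 1" using True \<open>m \<le> n\<close> by auto
  ultimately show ?thesis using True by auto
next
  case False
  assume "0 < n" "m \<le> n"
  with False have "2 \<le> n" by simp
  then have "Equiv (q m n) (Mult m (q 1 n)) \<in> TQ" using \<open>m \<le> n\<close> by (rule Equiv_q_Mult_in_TQ)
  then have "cls (q m n) = cls (Mult m (q 1 n))" by (rule cls_TQ_axiom)
  then show ?thesis by simp
qed

lemma cls_q_common_denominator:
  assumes "0 < n" "0 < k" "m \<le> n"
  shows "cls (q m n) = Lind.nmult (m * k) (cls (q 1 (n * k)))"
proof -
  have "Lind.unit_fraction n (Lind.nmult k (cls (q 1 (n * k))))"
    using Lind.unit_fraction_nmult unit_fraction_cls_q1 assms by simp
  then have "cls (q 1 n) = Lind.nmult k (cls (q 1 (n * k)))"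
    using Lind.unit_fraction_unique unit_fraction_cls_q1 assms(1) by blast
  then show ?thesis using cls_q[OF assms(1,3)] by (simp add: Lind.nmult_mult)
qed

section \<open>The bookkeeping formulas\<close>

fun bsem_nat :: "bconn \<Rightarrow> nat \<Rightarrow> nat \<Rightarrow> nat \<Rightarrow> nat" where
  "bsem_nat BProd n i j = i + j - n"
| "bsem_nat BImp n i j = min n (n - i + j)"
| "bsem_nat BOplus n i j = min n (i + j)"
| "bsem_nat BAnd n i j = min i j"
| "bsem_nat BOr n i j = max i j"
| "bsem_nat BEquiv n i j = min n (n - i + j) + min n (n - j + i) - n"

lemma real_bsem_nat:
  assumes "0 < n" "i \<le> n" "j \<le> n"
  shows "real (bsem_nat c n i j) = real n * bsem c (real i / real n) (real j / real n)"
proof -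
  have n: "real n > 0" using assms by simp
  show ?thesis
  proof (cases c)
    case BProd then show ?thesis using assms n by (auto simp: field_simps max_def of_nat_diff)
  next
    case BImp then show ?thesis using assms n by (auto simp: field_simps min_def of_nat_diff)
  next
    case BOplus then show ?thesis using assms n by (auto simp: field_simps min_def)
  next
    case BAnd then show ?thesis using assms n by (auto simp: field_simps min_def)
  next
    case BOr then show ?thesis using assms n by (auto simp: field_simps max_def)
  next
    case BEquiv then show ?thesis using assms n by (auto simp: field_simps min_def abs_if of_nat_diff)
  qed
qed

lemma cls_bsyn_nmult:
  assumes "Lind.unit_fraction n e" "0 < n" "i \<le> n" "j \<le> n"
    and "cls a = Lind.nmult i e" "cls b = Lind.nmult j e"
  shows "cls (bsyn c a b) = Lind.nmult (bsem_nat c n i j) e"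
  using assms by (cases c)
    (simp_all add: Lind.cdot_nmult Lind.res_nmult Lind.oplus_nmult Lind.meet_nmult
      Lind.join_nmult Lind.eqv_nmult)

lemma TQ_proves_bsyn:
  assumes "0 < n" "m \<le> n" "0 < l" "k \<le> l" "0 < t" "p \<le> t"
    and val: "bsem c (real m / real n) (real k / real l) = real p / real t"
  shows "TQ \<turnstile>\<^sub>L Equiv (bsyn c (q m n) (q k l)) (q p t)"
proof -
  define N where "N = n * l * t"
  define e where "e = cls (q 1 N)"
  have N: "0 < N" and mN: "m * (l * t) \<le> N" and kN: "k * (n * t) \<le> N"
    using assms by (simp_all add: N_def)
  have cls_m: "cls (q m n) = Lind.nmult (m * (l * t)) e"
    using cls_q_common_denominator[of n "l * t" m] assms by (simp add: e_def N_def mult.assoc)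
  have cls_k: "cls (q k l) = Lind.nmult (k * (n * t)) e"
    using cls_q_common_denominator[of l "n * t" k] assms by (simp add: e_def N_def ac_simps)
  have cls_p: "cls (q p t) = Lind.nmult (p * (n * l)) e"
    using cls_q_common_denominator[of t "n * l" p] assms by (simp add: e_def N_def ac_simps)
  have "real (bsem_nat c N (m * (l * t)) (k * (n * t))) = real N * (real p / real t)"
    using real_bsem_nat[OF N mN kN, of c] assms val by (simp add: N_def)
  also have "\<dots> = real (p * (n * l))" using assms by (simp add: N_def)
  finally have "bsem_nat c N (m * (l * t)) (k * (n * t)) = p * (n * l)"
    by (simp only: of_nat_eq_iff)
  then show ?thesis
    using cls_bsyn_nmult[OF unit_fraction_cls_q1[OF N, folded e_def] N mN kN cls_m cls_k] cls_p
    by (simp add: cls_eq_iff_provable_Equiv[symmetric])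
qed

lemma TQ_proves_Neg:
  assumes "0 < n" "m \<le> n" "0 < t" "p \<le> t" and val: "1 - real m / real n = real p / real t"
  shows "TQ \<turnstile>\<^sub>L Equiv (Neg (q m n)) (q p t)"
proof -
  have N: "0 < n * t" and mN: "m * t \<le> n * t" using assms by simp_all
  have "real (n * t - m * t) = real (n * t) * (1 - real m / real n)"
    using assms by (simp add: field_simps of_nat_diff)
  also have "\<dots> = real (p * n)" using assms val by (simp add: field_simps)
  finally have val_nat: "n * t - m * t = p * n" by (simp only: of_nat_eq_iff)
  define e where "e = cls (q 1 (n * t))"
  have cls_m: "cls (q m n) = Lind.nmult (m * t) e"
    using cls_q_common_denominator[of n t m] assms by (simp add: e_def)
  have cls_p: "cls (q p t) = Lind.nmult (p * n) e"
    using cls_q_common_denominator[of t n p] assms by (simp add: e_def mult.commute)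
  have "cls (Neg (q m n)) = cls (q p t)"
    using Lind.neg_nmult[OF unit_fraction_cls_q1[OF N, folded e_def] N mN] cls_m cls_p val_nat
    by simp
  then show ?thesis by (simp only: cls_eq_iff_provable_Equiv)
qed

lemma TQ_proves_q_eq:
  assumes "0 < n" "m \<le> n" "0 < n'" "m' \<le> n'" and val: "real m / real n = real m' / real n'"
  shows "TQ \<turnstile>\<^sub>L Equiv (q m n) (q m' n')"
proof -
  have "real (m * n') = real (m' * n)" using val assms by (simp add: field_simps)
  then have val_nat: "m * n' = m' * n" by (simp only: of_nat_eq_iff)
  have "cls (q m n) = Lind.nmult (m * n') (cls (q 1 (n * n')))"
    using cls_q_common_denominator[of n n' m] assms by simp
  also have "\<dots> = Lind.nmult (m' * n) (cls (q 1 (n * n')))"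
    by (simp only: val_nat)
  also have "\<dots> = cls (q m' n')"
    using cls_q_common_denominator[of n' n m'] assms by (simp add: mult.commute)
  finally show ?thesis by (simp only: cls_eq_iff_provable_Equiv)
qed

lemma TQ_proves_q_eq_Top:
  assumes "0 < n"
  shows "TQ \<turnstile>\<^sub>L Equiv (q n n) Top"
proof -
  have "cls (q n n) = Lind.one"
    using cls_q[OF assms order_refl] Lind.nmult_eq_one[OF unit_fraction_cls_q1[OF assms] assms]
    by simp
  then show ?thesis by (simp add: cls_eq_iff_provable_Equiv[symmetric])
qed

theorem lemma3p4:
  shows
    "(\<forall>c m n k l p t. 0 < n \<and> m \<le> n \<and> 0 < l \<and> k \<le> l \<and> 0 < t \<and> p \<le> t \<and>
        bsem c (real m / real n) (real k / real l) = real p / real t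
        \<longrightarrow> TQ \<turnstile>\<^sub>L Equiv (bsyn c (q m n) (q k l)) (q p t))
   \<and> (\<forall>m n p t. 0 < n \<and> m \<le> n \<and> 0 < t \<and> p \<le> t \<and>
        1 - real m / real n = real p / real t
        \<longrightarrow> TQ \<turnstile>\<^sub>L Equiv (Neg (q m n)) (q p t))
   \<and> (\<forall>m n m' n'. 0 < n \<and> m \<le> n \<and> 0 < n' \<and> m' \<le> n' \<and>
        real m / real n = real m' / real n'
        \<longrightarrow> TQ \<turnstile>\<^sub>L Equiv (q m n) (q m' n'))
   \<and> (\<forall>n. 0 < n \<longrightarrow> TQ \<turnstile>\<^sub>L Equiv (q n n) Top)"
  by (intro conjI allI impI; (elim conjE)?)
    (fact TQ_proves_bsyn TQ_proves_Neg TQ_proves_q_eq TQ_proves_q_eq_Top)+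

end
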